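(* Let $U$ be a Hilbert space, $H: U \rightrightarrows U$ with $H^{-1}(0)\ne\emptyset$, and for each $i\in\mathbb{N}$ let $V'_{i+1}: U \to U$ and $M_{i+1}, W_{i+1}, Z_{i+1}, \Xi_{i+1} \in \mathcal{L}(U;U)$ with $Z_{i+1}M_{i+1}$ self-adjoint and $Z_{i+1}M_{i+1} \ge 0$. Let $(u^i)_{i\in\mathbb{N}}\subset U$ satisfy \[ 0 \in W_{i+1}H(u^{i+1}) + V'_{i+1}(u^{i+1}) + M_{i+1}(u^{i+1}-u^i) \quad (i\in\mathbb{N}). \] Let $\hat u \in H^{-1}(0)$ and suppose that for every $i$, $H$ is $(Z_{i+1}\Xi_{i+1}, 2Z_{i+1}W_{i+1}, Z_{i+2}M_{i+2})$-partially strongly submonotone at $(\hat u, 0)$, with a neighbourhood $\mathcal{U}$ of $\hat u$ (common to all $i$). Suppose also that for every $i\in\mathbb{N}$ there is $\Delta_{i+1}\in\mathbb{R}$ such that for all $u^* \in H^{-1}(0)$, \[ \tfrac12\|u^{i+1}-u^i\|^2_{Z_{i+1}M_{i+1}} + \tfrac12\|u^{i+1}-u^*\|^2_{Z_{i+1}(M_{i+1}+\Xi_{i+1})-Z_{i+2}M_{i+2}} + \langle V'_{i+1}(u^{i+1}), u^{i+1}-u^*\rangle_{Z_{i+1}} \ge -\Delta_{i+1}. \] Then for every $N\ge1$ with $\{u^0,\dots,u^N\}\subset\mathcal{U}$, \[ \tfrac12 \operatorname{dist}^2_{Z_{N+1}M_{N+1}}(u^N, H^{-1}(0)) \le \tfrac12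 \operatorname{dist}^2_{Z_1M_1}(u^0, H^{-1}(0)) + \sum_{i=0}^{N-1}\Delta_{i+1}. \]
   Context: For $T\in\mathcal{L}(U;U)$: $\langle x,z\rangle_T:=\langle Tx,z\rangle$, $\|x\|_T^2:=\langle Tx,x\rangle$, $\operatorname{dist}_T^2(z,A):=\inf_{u\in A}\|z-u\|_T^2$; $T\ge S$ means $T-S$ is positive semidefinite. For $T: U\rightrightarrows U$, $T^{-1}(w):=\{u : w\in T(u)\}$. Definition (partial strong submonotonicity): for $\Xi,N,M\in\mathcal{L}(U;U)$ with $M\ge0$, $T:U\rightrightarrows U$ is $(\Xi,N,M)$-partially strongly submonotone at $(\hat u,\hat w)\in\operatorname{graph}T$ if there is a neighbourhood $\mathcal{U}\ni\hat u$ such that \[ \inf_{u^*\in T^{-1}(\hat w)}\big(\langle w-\hat w, u-u^*\rangle_N + \|u-u^*\|^2_{M-\Xi}\big) \ge \operatorname{dist}^2_M(u, T^{-1}(\hat w)) \quad (u\in\mathcal{U},\ w\in T(u)). \] *)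

theory Defs
  imports "HOL-Analysis.Analysis"
begin

text \<open>Bounded linear operators on U are represented by functions with bounded_linear.\<close>

definition innerT :: "('a::real_inner \<Rightarrow> 'a) \<Rightarrow> 'a \<Rightarrow> 'a \<Rightarrow> real" where
  "innerT T x z = inner (T x) z"

definition normT2 :: "('a::real_inner \<Rightarrow> 'a) \<Rightarrow> 'a \<Rightarrow> real" where
  "normT2 T x = inner (T x) x"

definition distT2 :: "('a::real_inner \<Rightarrow> 'a) \<Rightarrow> 'a \<Rightarrow> 'a set \<Rightarrow> real" where
  "distT2 T z A = Inf ((\<lambda>u. normT2 T (z - u)) ` A)"

definition psd :: "('a::real_inner \<Rightarrow> 'a) \<Rightarrow> bool" where
  "psd T \<longleftrightarrow> (\<forall>x. 0 \<le> inner (T x) x)"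

definition selfadjoint :: "('a::real_inner \<Rightarrow> 'a) \<Rightarrow> bool" where
  "selfadjoint T \<longleftrightarrow> (\<forall>x y. inner (T x) y = inner x (T y))"

definition inv_map :: "('a \<Rightarrow> 'b set) \<Rightarrow> 'b \<Rightarrow> 'a set" where
  "inv_map T w = {u. w \<in> T u}"

text \<open>The submonotonicity inequality on a given set Uset
  (inf over T^{-1}(what) \<ge> c written as: every element of the set is \<ge> c).\<close>
definition psub_on ::
  "('a::real_inner \<Rightarrow> 'a) \<Rightarrow> ('a \<Rightarrow> 'a) \<Rightarrow> ('a \<Rightarrow> 'a) \<Rightarrow> ('a \<Rightarrow> 'a set) \<Rightarrow> 'a \<Rightarrow> 'a \<Rightarrow> 'a set \<Rightarrow> bool" where
  "psub_on Xi N M T uh wh Uset \<longleftrightarrow>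
     (\<forall>u\<in>Uset. \<forall>w\<in>T u. \<forall>us\<in>inv_map T wh.
        innerT N (w - wh) (u - us) + normT2 (\<lambda>x. M x - Xi x) (u - us)
          \<ge> distT2 M u (inv_map T wh))"

definition is_nhd :: "'a::topological_space set \<Rightarrow> 'a \<Rightarrow> bool" where
  "is_nhd S x \<longleftrightarrow> (\<exists>S0. open S0 \<and> x \<in> S0 \<and> S0 \<subseteq> S)"

definition psubmono ::
  "('a::real_inner \<Rightarrow> 'a) \<Rightarrow> ('a \<Rightarrow> 'a) \<Rightarrow> ('a \<Rightarrow> 'a) \<Rightarrow> ('a \<Rightarrow> 'a set) \<Rightarrow> 'a \<Rightarrow> 'a \<Rightarrow> bool" where
  "psubmono Xi N M T uh wh \<longleftrightarrow>
     bounded_linear Xi \<and> bounded_linear N \<and> bounded_linear M \<and> psd M \<and> wh \<in> T uh \<and>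
     (\<exists>Uset. is_nhd Uset uh \<and> psub_on Xi N M T uh wh Uset)"

end

theory Submission
  imports Defs
begin

text \<open>Test the inclusion for u^{i+1} against Z_{i+1}(u^{i+1} - u^*) with u^* in H^{-1}(0):
  the preconditioner term M_{i+1}(u^{i+1} - u^i) splits by the three-point identity, the
  H-term is bounded below by partial strong submonotonicity, and the remaining terms are
  controlled by Delta_{i+1}. Taking the infimum over u^* gives a descent of the Z M-distance
  to H^{-1}(0) by at most Delta_{i+1} per step, which telescopes.\<close>

lemma normT2_three_point:
  fixes A :: "'a::real_inner \<Rightarrow> 'a"
  assumes "linear A" "selfadjoint A"
  shows "inner (A (a - b)) (a - c)
    = (1/2) * normT2 A (a - b) + (1/2) * normT2 A (a - c) - (1/2) * normT2 A (b - c)"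
proof -
  have sym: "inner (A (a - c)) (a - b) = inner (A (a - b)) (a - c)"
    using assms(2) unfolding selfadjoint_def by (metis inner_commute)
  have "b - c = (a - c) - (a - b)" by simp
  then have "normT2 A (b - c) = normT2 A (a - c) - inner (A (a - c)) (a - b)
      - inner (A (a - b)) (a - c) + normT2 A (a - b)"
    unfolding normT2_def using linear_diff[OF assms(1)]
    by (simp add: inner_diff_left inner_diff_right)
  with sym show ?thesis by linarith
qed

lemma distT2_greatest:
  assumes "S \<noteq> {}" "\<And>s. s \<in> S \<Longrightarrow> c \<le> normT2 T (z - s)"
  shows "c \<le> distT2 T z S"
  unfolding distT2_def using assms by (intro cINF_greatest) auto

lemma sum_bound_telescope:
  fixes f g :: "nat \<Rightarrow> real"
  assumes "\<And>i. i < N \<Longrightarrow> f (Suc i) \<le> f i + g i"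
  shows "f N \<le> f 0 + (\<Sum>i<N. g i)"
  using assms
proof (induction N)
  case (Suc N)
  then have "f N \<le> f 0 + (\<Sum>i<N. g i)" "f (Suc N) \<le> f N + g N" by simp_all
  then show ?case by simp
qed simp

lemma descent_step_pointwise:
  fixes H :: "'a::real_inner \<Rightarrow> 'a set"
  assumes lin: "linear Z" "linear M" and sa: "selfadjoint (Z \<circ> M)"
    and w: "w \<in> H un" and incl: "0 = W w + v + M (un - up)"
    and un: "un \<in> Uset"
    and sub: "psub_on (Z \<circ> Xi) (\<lambda>x. 2 *\<^sub>R Z (W x)) (Zn \<circ> Mn) H uh 0 Uset"
    and us: "us \<in> inv_map H 0"
    and Delta: "(1/2) * normT2 (Z \<circ> M) (un - up)
      + (1/2) * normT2 (\<lambda>x. Z (M x + Xi x) - Zn (Mn x)) (un - us)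
      + innerT Z v (un - us) \<ge> - \<delta>"
  shows "distT2 (Zn \<circ> Mn) un (inv_map H 0) - 2 * \<delta> \<le> normT2 (Z \<circ> M) (up - us)"
proof -
  define d where "d = un - us"
  have "Z 0 = Z (W w) + Z v + (Z \<circ> M) (un - up)"
    using incl linear_add[OF lin(1)] by (metis comp_apply)
  then have tested: "0 = inner (Z (W w)) d + inner (Z v) d + inner ((Z \<circ> M) (un - up)) d"
    using linear_0[OF lin(1)] by (metis inner_add_left inner_zero_left)
  have three_point: "inner ((Z \<circ> M) (un - up)) d = (1/2) * normT2 (Z \<circ> M) (un - up)
      + (1/2) * normT2 (Z \<circ> M) d - (1/2) * normT2 (Z \<circ> M) (up - us)"
    unfolding d_def using normT2_three_point[OF linear_compose[OF lin(2,1)] sa] by blast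
  have "normT2 (\<lambda>x. Z (M x + Xi x) - Zn (Mn x)) d
      = normT2 (Z \<circ> M) d + inner (Z (Xi d)) d - normT2 (Zn \<circ> Mn) d"
    unfolding normT2_def using linear_add[OF lin(1)] by (simp add: inner_diff_left inner_add_left)
  with Delta have Delta': "(1/2) * normT2 (Z \<circ> M) (un - up) + (1/2) * (normT2 (Z \<circ> M) d
      + inner (Z (Xi d)) d - normT2 (Zn \<circ> Mn) d) + inner (Z v) d \<ge> - \<delta>"
    unfolding d_def innerT_def by simp
  have "innerT (\<lambda>x. 2 *\<^sub>R Z (W x)) (w - 0) d + normT2 (\<lambda>x. (Zn \<circ> Mn) x - (Z \<circ> Xi) x) d
      \<ge> distT2 (Zn \<circ> Mn) un (inv_map H 0)"
    using sub un w us unfolding psub_on_def d_def inv_map_def by blast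
  then have "2 * inner (Z (W w)) d + normT2 (Zn \<circ> Mn) d - inner (Z (Xi d)) d
      \<ge> distT2 (Zn \<circ> Mn) un (inv_map H 0)"
    unfolding innerT_def normT2_def by (simp add: inner_diff_left)
  with tested three_point Delta' show ?thesis by argo
qed

lemma descent_step:
  fixes H :: "'a::real_inner \<Rightarrow> 'a set"
  assumes "inv_map H 0 \<noteq> {}"
    and "linear Z" "linear M" "selfadjoint (Z \<circ> M)"
    and "w \<in> H un" "0 = W w + v + M (un - up)" "un \<in> Uset"
    and "psub_on (Z \<circ> Xi) (\<lambda>x. 2 *\<^sub>R Z (W x)) (Zn \<circ> Mn) H uh 0 Uset"
    and "\<And>us. us \<in> inv_map H 0 \<Longrightarrow> (1/2) * normT2 (Z \<circ> M) (un - up)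
      + (1/2) * normT2 (\<lambda>x. Z (M x + Xi x) - Zn (Mn x)) (un - us)
      + innerT Z v (un - us) \<ge> - \<delta>"
  shows "(1/2) * distT2 (Zn \<circ> Mn) un (inv_map H 0)
    \<le> (1/2) * distT2 (Z \<circ> M) up (inv_map H 0) + \<delta>"
proof -
  have "distT2 (Zn \<circ> Mn) un (inv_map H 0) - 2 * \<delta> \<le> distT2 (Z \<circ> M) up (inv_map H 0)"
    using assms by (intro distT2_greatest descent_step_pointwise) auto
  then show ?thesis by linarith
qed

theorem corollary3p8:
  fixes H :: "'a::{real_inner, complete_space} \<Rightarrow> 'a set"
    and V :: "nat \<Rightarrow> 'a \<Rightarrow> 'a"
    and M W Z Xi :: "nat \<Rightarrow> 'a \<Rightarrow> 'a"
    and u :: "nat \<Rightarrow> 'a"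
    and uh :: 'a
    and Uset :: "'a set"
    and Delta :: "nat \<Rightarrow> real"
  assumes Hne: "inv_map H 0 \<noteq> {}"
    and lin: "\<And>i. bounded_linear (M (Suc i)) \<and> bounded_linear (W (Suc i))
                  \<and> bounded_linear (Z (Suc i)) \<and> bounded_linear (Xi (Suc i))"
    and sa: "\<And>i. selfadjoint (Z (Suc i) \<circ> M (Suc i))"
    and pos: "\<And>i. psd (Z (Suc i) \<circ> M (Suc i))"
    and iter: "\<And>i. \<exists>w\<in>H (u (Suc i)).
                 0 = W (Suc i) w + V (Suc i) (u (Suc i)) + M (Suc i) (u (Suc i) - u i)"
    and uh: "uh \<in> inv_map H 0"
    and nhd: "is_nhd Uset uh"
    and sub: "\<And>i. psubmono (Z (Suc i) \<circ> Xi (Suc i)) (\<lambda>x. 2 *\<^sub>R Z (Suc i) (W (Suc i) x))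
                  (Z (Suc (Suc i)) \<circ> M (Suc (Suc i))) H uh 0
               \<and> psub_on (Z (Suc i) \<circ> Xi (Suc i)) (\<lambda>x. 2 *\<^sub>R Z (Suc i) (W (Suc i) x))
                  (Z (Suc (Suc i)) \<circ> M (Suc (Suc i))) H uh 0 Uset"
    and Delta: "\<And>i us. us \<in> inv_map H 0 \<Longrightarrow>
        (1/2) * normT2 (Z (Suc i) \<circ> M (Suc i)) (u (Suc i) - u i)
      + (1/2) * normT2 (\<lambda>x. Z (Suc i) (M (Suc i) x + Xi (Suc i) x) - Z (Suc (Suc i)) (M (Suc (Suc i)) x))
                  (u (Suc i) - us)
      + innerT (Z (Suc i)) (V (Suc i) (u (Suc i))) (u (Suc i) - us) \<ge> - Delta (Suc i)"
  shows "\<forall>N\<ge>1. u ` {0..N} \<subseteq> Uset \<longrightarrow>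
     (1/2) * distT2 (Z (Suc N) \<circ> M (Suc N)) (u N) (inv_map H 0)
       \<le> (1/2) * distT2 (Z 1 \<circ> M 1) (u 0) (inv_map H 0) + (\<Sum>i<N. Delta (Suc i))"
proof (intro allI impI)
  fix N :: nat
  assume "u ` {0..N} \<subseteq> Uset"
  \<comment> \<open>Only the submonotonicity inequality on Uset is used.\<close>
  have "(1/2) * distT2 (Z (Suc (Suc i)) \<circ> M (Suc (Suc i))) (u (Suc i)) (inv_map H 0)
      \<le> (1/2) * distT2 (Z (Suc i) \<circ> M (Suc i)) (u i) (inv_map H 0) + Delta (Suc i)"
    if "i < N" for i
  proof -
    obtain w where "w \<in> H (u (Suc i))"
      and "0 = W (Suc i) w + V (Suc i) (u (Suc i)) + M (Suc i) (u (Suc i) - u i)"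
      using iter by blast
    moreover have "u (Suc i) \<in> Uset" using \<open>u ` {0..N} \<subseteq> Uset\<close> \<open>i < N\<close> by auto
    moreover have "linear (Z (Suc i))" "linear (M (Suc i))"
      using lin[of i] bounded_linear.linear by blast+
    ultimately show ?thesis
      using descent_step[OF Hne _ _ sa[of i]] sub[of i] Delta[of _ i] by blast
  qed
  then show "(1/2) * distT2 (Z (Suc N) \<circ> M (Suc N)) (u N) (inv_map H 0)
      \<le> (1/2) * distT2 (Z 1 \<circ> M 1) (u 0) (inv_map H 0) + (\<Sum>i<N. Delta (Suc i))"
    using sum_bound_telescope[of N "\<lambda>n. (1/2) * distT2 (Z (Suc n) \<circ> M (Suc n)) (u n) (inv_map H 0)"]
    by simp
qed

end
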